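(* Let $\mathcal{S}$ be a finite subset of $\overline{\mathbb{M}}$. Then there is an integer $e_0$ such that $\Delta^{(m)}_e(\mathcal{S})\subseteq\Delta^{(m)}_e(\phi(\mathcal{S}))$ for all $e\ge e_0$.
   Context: $q$ is a prime power, $m$ a positive integer. A monomial $\mu\neq1$ in $x_0,\dots,x_m$ written $x_0^{a_0}\cdots x_k^{a_k}$ with $a_k>0$ is projectively reduced if $a_0,\dots,a_{k-1}\le q-1$; $1$ is projectively reduced. $\overline{\mathbb{M}}$ is the set of projectively reduced monomials, $\overline{\mathbb{M}}_e$ those of degree $e$, and $\overline{\mathbb{M}}^{(m)}_e=\{x_0^{a_0}\cdots x_m^{a_m}\in\overline{\mathbb{M}}_e:a_m>0\}$. For a set $\mathcal{S}$ of monomials, $\Delta_e(\mathcal{S})=\{\mu\in\overline{\mathbb{M}}_e:\text{no }\nu\in\mathcal{S}\text{ divides }\mu\}$ and $\Delta^{(m)}_e(\mathcal{S})=\Delta_e(\mathcal{S})\cap\overline{\mathbb{M}}^{(m)}_e$. Given $\mathcal{S}\subseteq\overline{\mathbb{M}}$, for $\mu=x_0^{i_0}\cdots x_m^{i_m}\in\mathcal{S}$ set $\phi(\mu)=\mu x_{m-1}/x_m$ if $x_0^{i_0}\cdots x_{m-2}^{i_{m-2}}x_{m-1}^{i_{m-1}+i_m}\notin\mathcal{S}$ and $i_{m-1}+1<q$, and $\phi(\mu)=\mu$ otherwise; $\phi(\mathcal{S})$ is the image. *)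

theory Defs
  imports "HOL-Computational_Algebra.Primes"
begin

text \<open>A monomial x_0^a_0 ... x_m^a_m is represented by its exponent vector
  a :: nat \<Rightarrow> nat, with a i = 0 for i > m.\<close>

type_synonym monom = "nat \<Rightarrow> nat"

definition is_monom :: "nat \<Rightarrow> monom \<Rightarrow> bool" where
  "is_monom m a \<longleftrightarrow> (\<forall>i>m. a i = 0)"

definition mdeg :: "nat \<Rightarrow> monom \<Rightarrow> nat" where
  "mdeg m a = (\<Sum>i\<le>m. a i)"

definition mdvd :: "monom \<Rightarrow> monom \<Rightarrow> bool" where
  "mdvd b a \<longleftrightarrow> (\<forall>i. b i \<le> a i)"

definition proj_reduced :: "nat \<Rightarrow> nat \<Rightarrow> monom \<Rightarrow> bool" where
  "proj_reduced q m a \<longleftrightarrow> is_monom m a \<and>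
     ((\<forall>i. a i = 0) \<or> (\<exists>k\<le>m. 0 < a k \<and> (\<forall>i>k. a i = 0) \<and> (\<forall>i<k. a i \<le> q - 1)))"

definition Mbar :: "nat \<Rightarrow> nat \<Rightarrow> monom set" where
  "Mbar q m = {a. proj_reduced q m a}"

definition Mbar_deg :: "nat \<Rightarrow> nat \<Rightarrow> nat \<Rightarrow> monom set" where
  "Mbar_deg q m e = {a \<in> Mbar q m. mdeg m a = e}"

definition Mbar_deg_top :: "nat \<Rightarrow> nat \<Rightarrow> nat \<Rightarrow> monom set" where
  "Mbar_deg_top q m e = {a \<in> Mbar_deg q m e. 0 < a m}"

definition Delta :: "nat \<Rightarrow> nat \<Rightarrow> nat \<Rightarrow> monom set \<Rightarrow> monom set" where
  "Delta q m e S = {a \<in> Mbar_deg q m e. \<not> (\<exists>b\<in>S. mdvd b a)}"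

definition Delta_top :: "nat \<Rightarrow> nat \<Rightarrow> nat \<Rightarrow> monom set \<Rightarrow> monom set" where
  "Delta_top q m e S = Delta q m e S \<inter> Mbar_deg_top q m e"

definition phi :: "nat \<Rightarrow> nat \<Rightarrow> monom set \<Rightarrow> monom \<Rightarrow> monom" where
  "phi q m S a =
    (if (a((m-1) := a (m-1) + a m, m := 0)) \<notin> S \<and> a (m-1) + 1 < q
     then a((m-1) := a (m-1) + 1, m := a m - 1)
     else a)"

definition phi_set :: "nat \<Rightarrow> nat \<Rightarrow> monom set \<Rightarrow> monom set" where
  "phi_set q m S = phi q m S ` S"

end

theory Submission
  imports Defs
begin

text \<open>A reduced monomial of degree e with a_m > 0 has a_i \<le> q - 1 for all i < m, so
  a_m \<ge> e - m(q - 1) grows with e. Once a_m exceeds the m-th exponent of every element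
  of the finite set S, divisibility by phi(b) implies divisibility by b, because phi only
  lowers the exponent of x_m and raises that of x_(m-1).\<close>

lemma proj_reduced_le_if_top_pos:
  assumes "proj_reduced q m a" and "0 < a m" and "i < m"
  shows "a i \<le> q - 1"
proof -
  from assms(1,2) obtain k where k: "k \<le> m" "\<forall>i>k. a i = 0" "\<forall>i<k. a i \<le> q - 1"
    unfolding proj_reduced_def by auto
  have "k = m" using k assms(2) by (metis le_neq_implies_less less_irrefl)
  then show ?thesis using k assms(3) by auto
qed

lemma Mbar_deg_top_deg_le:
  assumes "a \<in> Mbar_deg_top q m e"
  shows "e \<le> m * (q - 1) + a m"
proof -
  have red: "proj_reduced q m a" and deg: "mdeg m a = e" and pos: "0 < a m"
    using assms by (auto simp: Mbar_deg_top_def Mbar_deg_def Mbar_def)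
  have "(\<Sum>i<m. a i) \<le> m * (q - 1)"
    using sum_bounded_above[of "{..<m}" a "q - 1"] proj_reduced_le_if_top_pos[OF red pos]
    by auto
  moreover have "mdeg m a = (\<Sum>i<m. a i) + a m"
    unfolding mdeg_def by (simp add: lessThan_Suc_atMost[symmetric])
  ultimately show ?thesis using deg by linarith
qed

lemma le_phi:
  assumes "i \<noteq> m"
  shows "b i \<le> phi q m S b i"
  using assms unfolding phi_def by auto

lemma mdvd_if_mdvd_phi:
  assumes "b m \<le> a m" and "mdvd (phi q m S b) a"
  shows "mdvd b a"
  unfolding mdvd_def
proof
  fix i
  show "b i \<le> a i"
  proof (cases "i = m")
    case True
    then show ?thesis using assms(1) by simp
  next
    case False
    then show ?thesis using le_phi[OF False] assms(2) le_trans unfolding mdvd_def by blast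
  qed
qed

lemma Delta_top_subset_Delta_top:
  assumes "\<And>c a. c \<in> T \<Longrightarrow> a \<in> Mbar_deg_top q m e \<Longrightarrow> mdvd c a \<Longrightarrow> \<exists>b\<in>S. mdvd b a"
  shows "Delta_top q m e S \<subseteq> Delta_top q m e T"
  using assms by (auto simp: Delta_top_def Delta_def)

lemma Delta_top_subset_Delta_top_phi_set:
  assumes "\<And>b. b \<in> S \<Longrightarrow> m * (q - 1) + b m \<le> e"
  shows "Delta_top q m e S \<subseteq> Delta_top q m e (phi_set q m S)"
proof (rule Delta_top_subset_Delta_top)
  fix c a
  assume "c \<in> phi_set q m S" and top: "a \<in> Mbar_deg_top q m e" and "mdvd c a"
  then obtain b where b: "b \<in> S" "mdvd (phi q m S b) a"
    unfolding phi_set_def by auto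
  have "b m \<le> a m"
    using assms[OF b(1)] Mbar_deg_top_deg_le[OF top] by linarith
  then show "\<exists>b\<in>S. mdvd b a"
    using mdvd_if_mdvd_phi b by blast
qed

theorem lemma4p6:
  fixes q m :: nat and S :: "monom set"
  assumes "\<exists>p k. prime p \<and> 0 < k \<and> q = p ^ k"
    and "0 < m"
    and "finite S" and "S \<subseteq> Mbar q m"
  shows "\<exists>e0::nat. \<forall>e\<ge>e0. Delta_top q m e S \<subseteq> Delta_top q m e (phi_set q m S)"
proof -
  define B where "B = Max (insert 0 ((\<lambda>b. b m) ` S))"
  have "b m \<le> B" if "b \<in> S" for b
    unfolding B_def using assms(3) that by (intro Max_ge) auto
  then have "Delta_top q m e S \<subseteq> Delta_top q m e (phi_set q m S)"
    if "m * (q - 1) + B \<le> e" for e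
    using that by (intro Delta_top_subset_Delta_top_phi_set) fastforce
  then show ?thesis by blast
qed

end
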